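(* Let $\mathbf K$ be an M$\Delta$C generated as a thick subcategory by a single object $G$. If $A\in\mathbf K$ and $V(A)=V(\mathcal S_1)\sqcup V(\mathcal S_2)$ (disjoint union) for collections of objects $\mathcal S_1,\mathcal S_2$, then there exist objects $A_1,A_2\in\mathbf K$ with $V(\mathcal S_i)=V(A_i)$ for $i=1,2$.
   Context: M$\Delta$C: triangulated category with monoidal structure $(\otimes,\mathbf 1)$, $\otimes$ exact in each variable. Prime ideal: proper thick two-sided ideal $\mathbf P$ with $\mathbf I\otimes\mathbf J\subseteq\mathbf P\Rightarrow\mathbf I\subseteq\mathbf P$ or $\mathbf J\subseteq\mathbf P$ for thick ideals. $\operatorname{Spc}\mathbf K$: set of primes; $V(A)=\{\mathbf P:A\notin\mathbf P\}$ and $V(\mathcal S)=\bigcap_{A\in\mathcal S}V(A)$. *)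

theory Defs
  imports Main
begin

text \<open>
  Morphisms are typed through the hom-sets: f : X \<rightarrow> Y means
  f \<in> hom K X Y.  Composition is written  cmp K g f  (= g after f).
\<close>

record ('o, 'm) mdc_struct =
  obj   :: "'o set"
  hom   :: "'o \<Rightarrow> 'o \<Rightarrow> 'm set"
  cmp   :: "'m \<Rightarrow> 'm \<Rightarrow> 'm"
  idm   :: "'o \<Rightarrow> 'm"
  madd  :: "'m \<Rightarrow> 'm \<Rightarrow> 'm"
  mzero :: "'o \<Rightarrow> 'o \<Rightarrow> 'm"
  mneg  :: "'m \<Rightarrow> 'm"
  shO   :: "'o \<Rightarrow> 'o"
  shM   :: "'m \<Rightarrow> 'm"
  tri   :: "('o \<times> 'o \<times> 'o \<times> 'm \<times> 'm \<times> 'm) set"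
  tensO :: "'o \<Rightarrow> 'o \<Rightarrow> 'o"
  tensM :: "'m \<Rightarrow> 'm \<Rightarrow> 'm"
  unitO :: "'o"
  assoc :: "'o \<Rightarrow> 'o \<Rightarrow> 'o \<Rightarrow> 'm"
  lunit :: "'o \<Rightarrow> 'm"
  runit :: "'o \<Rightarrow> 'm"
  sigL  :: "'o \<Rightarrow> 'o \<Rightarrow> 'm"   \<comment> \<open>sigL X W : (\<Sigma>X)\<otimes>W \<rightarrow> \<Sigma>(X\<otimes>W)\<close>
  sigR  :: "'o \<Rightarrow> 'o \<Rightarrow> 'm"   \<comment> \<open>sigR W X : W\<otimes>(\<Sigma>X) \<rightarrow> \<Sigma>(W\<otimes>X)\<close>

definition is_iso :: "('o,'m) mdc_struct \<Rightarrow> 'm \<Rightarrow> 'o \<Rightarrow> 'o \<Rightarrow> bool" where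
  "is_iso K f X Y \<longleftrightarrow> f \<in> hom K X Y \<and>
     (\<exists>g \<in> hom K Y X. cmp K g f = idm K X \<and> cmp K f g = idm K Y)"

definition isomorphic :: "('o,'m) mdc_struct \<Rightarrow> 'o \<Rightarrow> 'o \<Rightarrow> bool" where
  "isomorphic K X Y \<longleftrightarrow> (\<exists>f. is_iso K f X Y)"

definition category_ax :: "('o,'m) mdc_struct \<Rightarrow> bool" where
  "category_ax K \<longleftrightarrow>
     (\<forall>X Y f. f \<in> hom K X Y \<longrightarrow> X \<in> obj K \<and> Y \<in> obj K) \<and>
     (\<forall>X \<in> obj K. idm K X \<in> hom K X X) \<and>
     (\<forall>X Y Z f g. f \<in> hom K X Y \<longrightarrow> g \<in> hom K Y Z \<longrightarrow> cmp K g f \<in> hom K X Z) \<and>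
     (\<forall>X Y f. f \<in> hom K X Y \<longrightarrow> cmp K f (idm K X) = f \<and> cmp K (idm K Y) f = f) \<and>
     (\<forall>W X Y Z f g h. f \<in> hom K W X \<longrightarrow> g \<in> hom K X Y \<longrightarrow> h \<in> hom K Y Z \<longrightarrow>
        cmp K h (cmp K g f) = cmp K (cmp K h g) f)"

definition preadditive_ax :: "('o,'m) mdc_struct \<Rightarrow> bool" where
  "preadditive_ax K \<longleftrightarrow>
     (\<forall>X \<in> obj K. \<forall>Y \<in> obj K.
        mzero K X Y \<in> hom K X Y \<and>
        (\<forall>f \<in> hom K X Y. \<forall>g \<in> hom K X Y. madd K f g \<in> hom K X Y) \<and>
        (\<forall>f \<in> hom K X Y. mneg K f \<in> hom K X Y) \<and>
        (\<forall>f \<in> hom K X Y. \<forall>g \<in> hom K X Y. \<forall>h \<in> hom K X Y.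
            madd K (madd K f g) h = madd K f (madd K g h)) \<and>
        (\<forall>f \<in> hom K X Y. \<forall>g \<in> hom K X Y. madd K f g = madd K g f) \<and>
        (\<forall>f \<in> hom K X Y. madd K f (mzero K X Y) = f) \<and>
        (\<forall>f \<in> hom K X Y. madd K f (mneg K f) = mzero K X Y)) \<and>
     (\<forall>X Y Z f g h. f \<in> hom K X Y \<longrightarrow> g \<in> hom K X Y \<longrightarrow> h \<in> hom K Y Z \<longrightarrow>
        cmp K h (madd K f g) = madd K (cmp K h f) (cmp K h g)) \<and>
     (\<forall>X Y Z f g h. f \<in> hom K X Y \<longrightarrow> g \<in> hom K Y Z \<longrightarrow> h \<in> hom K Y Z \<longrightarrow>
        cmp K (madd K g h) f = madd K (cmp K g f) (cmp K h f))"

definition zero_obj :: "('o,'m) mdc_struct \<Rightarrow> 'o \<Rightarrow> bool" where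
  "zero_obj K Z \<longleftrightarrow> Z \<in> obj K \<and>
     (\<forall>X \<in> obj K. hom K Z X = {mzero K Z X} \<and> hom K X Z = {mzero K X Z})"

definition is_biprod :: "('o,'m) mdc_struct \<Rightarrow> 'o \<Rightarrow> 'o \<Rightarrow> 'o \<Rightarrow> bool" where
  "is_biprod K X Y S \<longleftrightarrow> X \<in> obj K \<and> Y \<in> obj K \<and> S \<in> obj K \<and>
     (\<exists>i1 \<in> hom K X S. \<exists>i2 \<in> hom K Y S. \<exists>p1 \<in> hom K S X. \<exists>p2 \<in> hom K S Y.
        cmp K p1 i1 = idm K X \<and> cmp K p2 i2 = idm K Y \<and>
        cmp K p1 i2 = mzero K Y X \<and> cmp K p2 i1 = mzero K X Y \<and>
        madd K (cmp K i1 p1) (cmp K i2 p2) = idm K S)"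

definition additive_ax :: "('o,'m) mdc_struct \<Rightarrow> bool" where
  "additive_ax K \<longleftrightarrow> category_ax K \<and> preadditive_ax K \<and>
     (\<exists>Z. zero_obj K Z) \<and>
     (\<forall>X \<in> obj K. \<forall>Y \<in> obj K. \<exists>S. is_biprod K X Y S)"

definition shift_ax :: "('o,'m) mdc_struct \<Rightarrow> bool" where
  "shift_ax K \<longleftrightarrow>
     (\<forall>X \<in> obj K. shO K X \<in> obj K \<and> shM K (idm K X) = idm K (shO K X)) \<and>
     (\<forall>X \<in> obj K. \<forall>Y \<in> obj K. bij_betw (shM K) (hom K X Y) (hom K (shO K X) (shO K Y))) \<and>
     (\<forall>X Y Z f g. f \<in> hom K X Y \<longrightarrow> g \<in> hom K Y Z \<longrightarrow>
        shM K (cmp K g f) = cmp K (shM K g) (shM K f)) \<and>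
     (\<forall>X Y f g. f \<in> hom K X Y \<longrightarrow> g \<in> hom K X Y \<longrightarrow>
        shM K (madd K f g) = madd K (shM K f) (shM K g)) \<and>
     (\<forall>Y \<in> obj K. \<exists>X \<in> obj K. isomorphic K (shO K X) Y)"

definition is_triangle :: "('o,'m) mdc_struct \<Rightarrow> ('o \<times> 'o \<times> 'o \<times> 'm \<times> 'm \<times> 'm) \<Rightarrow> bool" where
  "is_triangle K T \<longleftrightarrow> (case T of (X,Y,Z,f,g,h) \<Rightarrow>
     f \<in> hom K X Y \<and> g \<in> hom K Y Z \<and> h \<in> hom K Z (shO K X))"

definition tri_morph :: "('o,'m) mdc_struct \<Rightarrow> ('o \<times> 'o \<times> 'o \<times> 'm \<times> 'm \<times> 'm)
     \<Rightarrow> ('o \<times> 'o \<times> 'o \<times> 'm \<times> 'm \<times> 'm) \<Rightarrow> 'm \<Rightarrow> 'm \<Rightarrow> 'm \<Rightarrow> bool" where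
  "tri_morph K T T' a b c \<longleftrightarrow> (case T of (X,Y,Z,f,g,h) \<Rightarrow> case T' of (X',Y',Z',f',g',h') \<Rightarrow>
     a \<in> hom K X X' \<and> b \<in> hom K Y Y' \<and> c \<in> hom K Z Z' \<and>
     cmp K b f = cmp K f' a \<and> cmp K c g = cmp K g' b \<and> cmp K (shM K a) h = cmp K h' c)"

definition triangulated_ax :: "('o,'m) mdc_struct \<Rightarrow> bool" where
  "triangulated_ax K \<longleftrightarrow> additive_ax K \<and> shift_ax K \<and>
     (\<forall>T \<in> tri K. is_triangle K T) \<and>
     \<comment> \<open>TR1\<close>
     (\<forall>T T' a b c. T \<in> tri K \<longrightarrow> is_triangle K T' \<longrightarrow> tri_morph K T T' a b c \<longrightarrow>
        (case T of (X,Y,Z,_) \<Rightarrow> case T' of (X',Y',Z',_) \<Rightarrow>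
          is_iso K a X X' \<and> is_iso K b Y Y' \<and> is_iso K c Z Z') \<longrightarrow> T' \<in> tri K) \<and>
     (\<forall>X \<in> obj K. \<forall>Z. zero_obj K Z \<longrightarrow>
        (X, X, Z, idm K X, mzero K X Z, mzero K Z (shO K X)) \<in> tri K) \<and>
     (\<forall>X Y f. f \<in> hom K X Y \<longrightarrow> (\<exists>Z g h. (X,Y,Z,f,g,h) \<in> tri K)) \<and>
     \<comment> \<open>TR2\<close>
     (\<forall>X Y Z f g h. (X,Y,Z,f,g,h) \<in> tri K \<longleftrightarrow>
        (Y, Z, shO K X, g, h, mneg K (shM K f)) \<in> tri K) \<and>
     \<comment> \<open>TR3\<close>
     (\<forall>X Y Z f g h X' Y' Z' f' g' h' a b.
        (X,Y,Z,f,g,h) \<in> tri K \<longrightarrow> (X',Y',Z',f',g',h') \<in> tri K \<longrightarrow>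
        a \<in> hom K X X' \<longrightarrow> b \<in> hom K Y Y' \<longrightarrow> cmp K b f = cmp K f' a \<longrightarrow>
        (\<exists>c. tri_morph K (X,Y,Z,f,g,h) (X',Y',Z',f',g',h') a b c)) \<and>
     \<comment> \<open>TR4 (octahedral axiom)\<close>
     (\<forall>X Y Z f g Q1 p1 d1 Q2 p2 d2 Q3 p3 d3.
        f \<in> hom K X Y \<longrightarrow> g \<in> hom K Y Z \<longrightarrow>
        (X,Y,Q1,f,p1,d1) \<in> tri K \<longrightarrow> (X,Z,Q2,cmp K g f,p2,d2) \<in> tri K \<longrightarrow>
        (Y,Z,Q3,g,p3,d3) \<in> tri K \<longrightarrow>
        (\<exists>a b. (Q1,Q2,Q3,a,b,cmp K (shM K p1) d3) \<in> tri K \<and>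
           cmp K a p1 = cmp K p2 g \<and> cmp K d2 a = d1 \<and>
           cmp K b p2 = p3 \<and> cmp K d3 b = cmp K (shM K f) d2))"

definition monoidal_ax :: "('o,'m) mdc_struct \<Rightarrow> bool" where
  "monoidal_ax K \<longleftrightarrow>
     unitO K \<in> obj K \<and>
     (\<forall>X \<in> obj K. \<forall>Y \<in> obj K. tensO K X Y \<in> obj K) \<and>
     (\<forall>X Y X' Y' f g. f \<in> hom K X Y \<longrightarrow> g \<in> hom K X' Y' \<longrightarrow>
        tensM K f g \<in> hom K (tensO K X X') (tensO K Y Y')) \<and>
     (\<forall>X \<in> obj K. \<forall>Y \<in> obj K. tensM K (idm K X) (idm K Y) = idm K (tensO K X Y)) \<and>
     (\<forall>X Y Z X' Y' Z' f g f' g'. f \<in> hom K X Y \<longrightarrow> g \<in> hom K Y Z \<longrightarrow>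
        f' \<in> hom K X' Y' \<longrightarrow> g' \<in> hom K Y' Z' \<longrightarrow>
        tensM K (cmp K g f) (cmp K g' f') = cmp K (tensM K g g') (tensM K f f')) \<and>
     \<comment> \<open>additive in each variable\<close>
     (\<forall>X Y X' Y' f g h. f \<in> hom K X Y \<longrightarrow> g \<in> hom K X Y \<longrightarrow> h \<in> hom K X' Y' \<longrightarrow>
        tensM K (madd K f g) h = madd K (tensM K f h) (tensM K g h) \<and>
        tensM K h (madd K f g) = madd K (tensM K h f) (tensM K h g)) \<and>
     \<comment> \<open>associator and unitors: natural isomorphisms\<close>
     (\<forall>X \<in> obj K. \<forall>Y \<in> obj K. \<forall>Z \<in> obj K.
        is_iso K (assoc K X Y Z) (tensO K (tensO K X Y) Z) (tensO K X (tensO K Y Z))) \<and>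
     (\<forall>X \<in> obj K. is_iso K (lunit K X) (tensO K (unitO K) X) X \<and>
                   is_iso K (runit K X) (tensO K X (unitO K)) X) \<and>
     (\<forall>X Y Z X' Y' Z' f g h. f \<in> hom K X X' \<longrightarrow> g \<in> hom K Y Y' \<longrightarrow> h \<in> hom K Z Z' \<longrightarrow>
        cmp K (assoc K X' Y' Z') (tensM K (tensM K f g) h) =
        cmp K (tensM K f (tensM K g h)) (assoc K X Y Z)) \<and>
     (\<forall>X Y f. f \<in> hom K X Y \<longrightarrow>
        cmp K (lunit K Y) (tensM K (idm K (unitO K)) f) = cmp K f (lunit K X) \<and>
        cmp K (runit K Y) (tensM K f (idm K (unitO K))) = cmp K f (runit K X)) \<and>
     \<comment> \<open>pentagon and triangle identities\<close>
     (\<forall>W \<in> obj K. \<forall>X \<in> obj K. \<forall>Y \<in> obj K. \<forall>Z \<in> obj K.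
        cmp K (assoc K W X (tensO K Y Z)) (assoc K (tensO K W X) Y Z) =
        cmp K (tensM K (idm K W) (assoc K X Y Z))
          (cmp K (assoc K W (tensO K X Y) Z) (tensM K (assoc K W X Y) (idm K Z)))) \<and>
     (\<forall>X \<in> obj K. \<forall>Y \<in> obj K.
        cmp K (tensM K (idm K X) (lunit K Y)) (assoc K X (unitO K) Y) =
        tensM K (runit K X) (idm K Y))"

definition tensor_exact_ax :: "('o,'m) mdc_struct \<Rightarrow> bool" where
  "tensor_exact_ax K \<longleftrightarrow>
     (\<forall>W \<in> obj K. \<forall>X \<in> obj K.
        is_iso K (sigL K X W) (tensO K (shO K X) W) (shO K (tensO K X W)) \<and>
        is_iso K (sigR K W X) (tensO K W (shO K X)) (shO K (tensO K W X))) \<and>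
     (\<forall>W \<in> obj K. \<forall>X Y f. f \<in> hom K X Y \<longrightarrow>
        cmp K (sigL K Y W) (tensM K (shM K f) (idm K W)) =
          cmp K (shM K (tensM K f (idm K W))) (sigL K X W) \<and>
        cmp K (sigR K W Y) (tensM K (idm K W) (shM K f)) =
          cmp K (shM K (tensM K (idm K W) f)) (sigR K W X)) \<and>
     (\<forall>W \<in> obj K. \<forall>X Y Z f g h. (X,Y,Z,f,g,h) \<in> tri K \<longrightarrow>
        (tensO K X W, tensO K Y W, tensO K Z W, tensM K f (idm K W), tensM K g (idm K W),
           cmp K (sigL K X W) (tensM K h (idm K W))) \<in> tri K \<and>
        (tensO K W X, tensO K W Y, tensO K W Z, tensM K (idm K W) f, tensM K (idm K W) g,
           cmp K (sigR K W X) (tensM K (idm K W) h)) \<in> tri K)"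

definition mdc :: "('o,'m) mdc_struct \<Rightarrow> bool" where
  "mdc K \<longleftrightarrow> triangulated_ax K \<and> monoidal_ax K \<and> tensor_exact_ax K"

text \<open>Thick subcategories (full, replete, triangulated, closed under direct summands)
  are identified with their sets of objects.\<close>
definition thick :: "('o,'m) mdc_struct \<Rightarrow> 'o set \<Rightarrow> bool" where
  "thick K C \<longleftrightarrow> C \<subseteq> obj K \<and>
     (\<forall>Z. zero_obj K Z \<longrightarrow> Z \<in> C) \<and>
     (\<forall>X Y. X \<in> C \<longrightarrow> isomorphic K X Y \<longrightarrow> Y \<in> C) \<and>
     (\<forall>X \<in> obj K. shO K X \<in> C \<longleftrightarrow> X \<in> C) \<and>
     (\<forall>X Y Z f g h. (X,Y,Z,f,g,h) \<in> tri K \<longrightarrow>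
        (X \<in> C \<longrightarrow> Y \<in> C \<longrightarrow> Z \<in> C) \<and> (Y \<in> C \<longrightarrow> Z \<in> C \<longrightarrow> X \<in> C) \<and>
        (X \<in> C \<longrightarrow> Z \<in> C \<longrightarrow> Y \<in> C)) \<and>
     (\<forall>X Y S. is_biprod K X Y S \<longrightarrow> S \<in> C \<longrightarrow> X \<in> C)"

definition thick_ideal :: "('o,'m) mdc_struct \<Rightarrow> 'o set \<Rightarrow> bool" where
  "thick_ideal K I \<longleftrightarrow> thick K I \<and>
     (\<forall>X \<in> I. \<forall>Y \<in> obj K. tensO K X Y \<in> I \<and> tensO K Y X \<in> I)"

definition prime_ideal :: "('o,'m) mdc_struct \<Rightarrow> 'o set \<Rightarrow> bool" where
  "prime_ideal K P \<longleftrightarrow> thick_ideal K P \<and> P \<noteq> obj K \<and>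
     (\<forall>I J. thick_ideal K I \<longrightarrow> thick_ideal K J \<longrightarrow>
        (\<forall>X \<in> I. \<forall>Y \<in> J. tensO K X Y \<in> P) \<longrightarrow> I \<subseteq> P \<or> J \<subseteq> P)"

definition Spc :: "('o,'m) mdc_struct \<Rightarrow> 'o set set" where
  "Spc K = {P. prime_ideal K P}"

definition Vobj :: "('o,'m) mdc_struct \<Rightarrow> 'o \<Rightarrow> 'o set set" where
  "Vobj K A = {P \<in> Spc K. A \<notin> P}"

definition Vset :: "('o,'m) mdc_struct \<Rightarrow> 'o set \<Rightarrow> 'o set set" where
  "Vset K S = {P \<in> Spc K. \<forall>A \<in> S. A \<notin> P}"

definition thick_generated_by :: "('o,'m) mdc_struct \<Rightarrow> 'o \<Rightarrow> bool" where
  "thick_generated_by K G \<longleftrightarrow> G \<in> obj K \<and> (\<forall>C. thick K C \<longrightarrow> G \<in> C \<longrightarrow> C = obj K)"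

end

theory Submission
  imports Defs
begin

text \<open>
  Because \<open>G\<close> generates \<open>K\<close>, for a prime \<open>P\<close> the thick subcategory
  \<open>{X. (B \<otimes> X) \<otimes> C \<in> P}\<close> contains all objects as soon as it contains \<open>G\<close>;
  since primality of \<open>P\<close> is detected by such sandwiches \<open>B \<otimes> K \<otimes> C \<subseteq> P\<close>,
  this gives \<open>V((B \<otimes> G) \<otimes> C) = V(B) \<inter> V(C)\<close>, so every \<open>V(A) \<inter> V(F)\<close> with
  \<open>F\<close> finite is again of the form \<open>V(A')\<close>.
  Disjointness means \<open>V(S\<^sub>1 \<union> S\<^sub>2) = {}\<close>, and by a Zorn argument (a thick ideal
  maximal among those avoiding a \<open>G\<close>-multiplicative set is prime) this already holds for
  a finite \<open>F \<subseteq> S\<^sub>1 \<union> S\<^sub>2\<close>. Then \<open>V(S\<^sub>i) = V(A) \<inter> V(F \<inter> S\<^sub>i)\<close>.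
\<close>

locale mdc_cat =
  fixes K :: "('o,'m) mdc_struct"
  assumes mdc: "mdc K"
begin

lemma triangulated: "triangulated_ax K" and monoidal: "monoidal_ax K"
  and tensor_exact: "tensor_exact_ax K"
  using mdc unfolding mdc_def by blast+

lemma additive: "additive_ax K" and shift: "shift_ax K"
  using triangulated unfolding triangulated_ax_def by blast+

lemma category: "category_ax K" and preadditive: "preadditive_ax K"
  using additive unfolding additive_ax_def by blast+

lemma hom_obj: "f \<in> hom K X Y \<Longrightarrow> X \<in> obj K \<and> Y \<in> obj K"
  and id_hom: "X \<in> obj K \<Longrightarrow> idm K X \<in> hom K X X"
  and cmp_hom: "f \<in> hom K X Y \<Longrightarrow> g \<in> hom K Y Z \<Longrightarrow> cmp K g f \<in> hom K X Z"
  and cmp_id_right: "f \<in> hom K X Y \<Longrightarrow> cmp K f (idm K X) = f"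
  and cmp_id_left: "f \<in> hom K X Y \<Longrightarrow> cmp K (idm K Y) f = f"
  and cmp_assoc: "f \<in> hom K W X \<Longrightarrow> g \<in> hom K X Y \<Longrightarrow> h \<in> hom K Y Z \<Longrightarrow>
        cmp K h (cmp K g f) = cmp K (cmp K h g) f"
  using category unfolding category_ax_def by blast+

lemma zero_hom: "X \<in> obj K \<Longrightarrow> Y \<in> obj K \<Longrightarrow> mzero K X Y \<in> hom K X Y"
  and neg_hom: "f \<in> hom K X Y \<Longrightarrow> mneg K f \<in> hom K X Y"
  and add_assoc: "f \<in> hom K X Y \<Longrightarrow> g \<in> hom K X Y \<Longrightarrow> h \<in> hom K X Y \<Longrightarrow>
        madd K (madd K f g) h = madd K f (madd K g h)"
  and add_zero: "f \<in> hom K X Y \<Longrightarrow> madd K f (mzero K X Y) = f"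
  and add_neg: "f \<in> hom K X Y \<Longrightarrow> madd K f (mneg K f) = mzero K X Y"
  and cmp_add_left: "f \<in> hom K X Y \<Longrightarrow> g \<in> hom K X Y \<Longrightarrow> h \<in> hom K Y Z \<Longrightarrow>
        cmp K h (madd K f g) = madd K (cmp K h f) (cmp K h g)"
  and cmp_add_right: "f \<in> hom K X Y \<Longrightarrow> g \<in> hom K Y Z \<Longrightarrow> h \<in> hom K Y Z \<Longrightarrow>
        cmp K (madd K g h) f = madd K (cmp K g f) (cmp K h f)"
  using preadditive hom_obj unfolding preadditive_ax_def by meson+

lemma shift_obj: "X \<in> obj K \<Longrightarrow> shO K X \<in> obj K"
  using shift unfolding shift_ax_def by blast

lemma tri_is_triangle: "T \<in> tri K \<Longrightarrow> is_triangle K T"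
  using triangulated unfolding triangulated_ax_def by (elim conjE) blast

lemma tri_obj: "(X,Y,Z,f,g,h) \<in> tri K \<Longrightarrow> X \<in> obj K \<and> Y \<in> obj K \<and> Z \<in> obj K"
  using tri_is_triangle hom_obj unfolding is_triangle_def by fastforce

lemma unit_obj: "unitO K \<in> obj K"
  and tens_obj: "X \<in> obj K \<Longrightarrow> Y \<in> obj K \<Longrightarrow> tensO K X Y \<in> obj K"
  and tens_hom: "f \<in> hom K X Y \<Longrightarrow> g \<in> hom K X' Y' \<Longrightarrow>
        tensM K f g \<in> hom K (tensO K X X') (tensO K Y Y')"
  and tens_id: "X \<in> obj K \<Longrightarrow> Y \<in> obj K \<Longrightarrow> tensM K (idm K X) (idm K Y) = idm K (tensO K X Y)"
  and tens_cmp: "f \<in> hom K X Y \<Longrightarrow> g \<in> hom K Y Z \<Longrightarrow> f' \<in> hom K X' Y' \<Longrightarrow> g' \<in> hom K Y' Z' \<Longrightarrow>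
        tensM K (cmp K g f) (cmp K g' f') = cmp K (tensM K g g') (tensM K f f')"
  and tens_add_left: "f \<in> hom K X Y \<Longrightarrow> g \<in> hom K X Y \<Longrightarrow> h \<in> hom K X' Y' \<Longrightarrow>
        tensM K (madd K f g) h = madd K (tensM K f h) (tensM K g h)"
  and tens_add_right: "f \<in> hom K X Y \<Longrightarrow> g \<in> hom K X Y \<Longrightarrow> h \<in> hom K X' Y' \<Longrightarrow>
        tensM K h (madd K f g) = madd K (tensM K h f) (tensM K h g)"
  and assoc_iso: "X \<in> obj K \<Longrightarrow> Y \<in> obj K \<Longrightarrow> Z \<in> obj K \<Longrightarrow>
        is_iso K (assoc K X Y Z) (tensO K (tensO K X Y) Z) (tensO K X (tensO K Y Z))"
  and lunit_iso: "X \<in> obj K \<Longrightarrow> is_iso K (lunit K X) (tensO K (unitO K) X) X"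
  and runit_iso: "X \<in> obj K \<Longrightarrow> is_iso K (runit K X) (tensO K X (unitO K)) X"
  using monoidal unfolding monoidal_ax_def by simp_all

lemma sigL_iso: "W \<in> obj K \<Longrightarrow> X \<in> obj K \<Longrightarrow>
        is_iso K (sigL K X W) (tensO K (shO K X) W) (shO K (tensO K X W))"
  and sigR_iso: "W \<in> obj K \<Longrightarrow> X \<in> obj K \<Longrightarrow>
        is_iso K (sigR K W X) (tensO K W (shO K X)) (shO K (tensO K W X))"
  and tens_tri_left: "W \<in> obj K \<Longrightarrow> (X,Y,Z,f,g,h) \<in> tri K \<Longrightarrow>
        (tensO K X W, tensO K Y W, tensO K Z W, tensM K f (idm K W), tensM K g (idm K W),
           cmp K (sigL K X W) (tensM K h (idm K W))) \<in> tri K"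
  and tens_tri_right: "W \<in> obj K \<Longrightarrow> (X,Y,Z,f,g,h) \<in> tri K \<Longrightarrow>
        (tensO K W X, tensO K W Y, tensO K W Z, tensM K (idm K W) f, tensM K (idm K W) g,
           cmp K (sigR K W X) (tensM K (idm K W) h)) \<in> tri K"
  using tensor_exact unfolding tensor_exact_ax_def by blast+

lemma isomorphic_obj: "isomorphic K X Y \<Longrightarrow> X \<in> obj K \<and> Y \<in> obj K"
  unfolding isomorphic_def is_iso_def using hom_obj by blast

lemma isomorphic_sym: "isomorphic K X Y \<Longrightarrow> isomorphic K Y X"
  unfolding isomorphic_def is_iso_def by blast

lemma isomorphic_trans:
  assumes "isomorphic K X Y" and "isomorphic K Y Z"
  shows "isomorphic K X Z"
proof -
  obtain f g where f: "f \<in> hom K X Y" "g \<in> hom K Y X" "cmp K g f = idm K X" "cmp K f g = idm K Y"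
    using assms(1) unfolding isomorphic_def is_iso_def by blast
  obtain f' g' where f': "f' \<in> hom K Y Z" "g' \<in> hom K Z Y"
    "cmp K g' f' = idm K Y" "cmp K f' g' = idm K Z"
    using assms(2) unfolding isomorphic_def is_iso_def by blast
  have "cmp K (cmp K g g') (cmp K f' f) = cmp K g (cmp K g' (cmp K f' f))"
    using cmp_assoc[OF cmp_hom[OF f(1) f'(1)] f'(2) f(2)] by simp
  also have "cmp K g' (cmp K f' f) = f"
    using cmp_assoc[OF f(1) f'(1) f'(2)] f'(3) cmp_id_left[OF f(1)] by simp
  finally have left: "cmp K (cmp K g g') (cmp K f' f) = idm K X"
    using f by simp
  have "cmp K (cmp K f' f) (cmp K g g') = cmp K f' (cmp K f (cmp K g g'))"
    using cmp_assoc[OF cmp_hom[OF f'(2) f(2)] f(1) f'(1)] by simp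
  also have "cmp K f (cmp K g g') = g'"
    using cmp_assoc[OF f'(2) f(2) f(1)] f(4) cmp_id_left[OF f'(2)] by simp
  finally have right: "cmp K (cmp K f' f) (cmp K g g') = idm K Z"
    using f' by simp
  show ?thesis
    unfolding isomorphic_def is_iso_def using left right f f' cmp_hom by blast
qed

lemma is_iso_isomorphic: "is_iso K f X Y \<Longrightarrow> isomorphic K X Y"
  unfolding isomorphic_def by blast

lemma add_idem_eq_zero:
  assumes f: "f \<in> hom K X Y" and idem: "madd K f f = f"
  shows "f = mzero K X Y"
proof -
  have "f = madd K f (madd K f (mneg K f))"
    using add_zero add_neg f by simp
  also have "\<dots> = madd K (madd K f f) (mneg K f)"
    using add_assoc neg_hom f by simp
  finally show ?thesis using idem add_neg f by simp
qed

lemma zero_add_zero: "X \<in> obj K \<Longrightarrow> Y \<in> obj K \<Longrightarrow> madd K (mzero K X Y) (mzero K X Y) = mzero K X Y"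
  using add_zero zero_hom by blast

lemma additive_map_zero:
  assumes "X \<in> obj K" "Y \<in> obj K" and "\<phi> (mzero K X Y) \<in> hom K A B"
    and "\<phi> (madd K (mzero K X Y) (mzero K X Y)) = madd K (\<phi> (mzero K X Y)) (\<phi> (mzero K X Y))"
  shows "\<phi> (mzero K X Y) = mzero K A B"
  using add_idem_eq_zero[OF assms(3)] assms(4) zero_add_zero[OF assms(1,2)] by simp

lemma cmp_zero_right:
  assumes h: "h \<in> hom K Y Z" and X: "X \<in> obj K"
  shows "cmp K h (mzero K X Y) = mzero K X Z"
proof -
  have Y: "Y \<in> obj K" using hom_obj h by blast
  show ?thesis
  proof (rule additive_map_zero[OF X Y])
    show "cmp K h (mzero K X Y) \<in> hom K X Z"
      using cmp_hom zero_hom h X Y by blast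
    show "cmp K h (madd K (mzero K X Y) (mzero K X Y)) =
        madd K (cmp K h (mzero K X Y)) (cmp K h (mzero K X Y))"
      using cmp_add_left zero_hom h X Y by blast
  qed
qed

lemma cmp_zero_left:
  assumes f: "f \<in> hom K X Y" and Z: "Z \<in> obj K"
  shows "cmp K (mzero K Y Z) f = mzero K X Z"
proof -
  have Y: "Y \<in> obj K" using hom_obj f by blast
  show ?thesis
  proof (rule additive_map_zero[OF Y Z, where \<phi> = "\<lambda>g. cmp K g f"])
    show "cmp K (mzero K Y Z) f \<in> hom K X Z"
      using cmp_hom zero_hom f Y Z by blast
    show "cmp K (madd K (mzero K Y Z) (mzero K Y Z)) f =
        madd K (cmp K (mzero K Y Z) f) (cmp K (mzero K Y Z) f)"
      using cmp_add_right zero_hom f Y Z by blast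
  qed
qed

lemma zero_obj_iff_id_eq_zero: "zero_obj K Z \<longleftrightarrow> Z \<in> obj K \<and> idm K Z = mzero K Z Z"
proof
  assume "zero_obj K Z"
  then show "Z \<in> obj K \<and> idm K Z = mzero K Z Z"
    unfolding zero_obj_def using id_hom by blast
next
  assume Z: "Z \<in> obj K \<and> idm K Z = mzero K Z Z"
  have "hom K Z X = {mzero K Z X} \<and> hom K X Z = {mzero K X Z}" if X: "X \<in> obj K" for X
  proof -
    have "f = mzero K Z X" if "f \<in> hom K Z X" for f
      using cmp_id_right[OF that] cmp_zero_right[OF that] Z by simp
    moreover have "f = mzero K X Z" if "f \<in> hom K X Z" for f
      using cmp_id_left[OF that] cmp_zero_left[OF that] Z by simp
    ultimately show ?thesis using zero_hom X Z by blast
  qed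
  with Z show "zero_obj K Z" unfolding zero_obj_def by blast
qed

definition additive_functor :: "('o \<Rightarrow> 'o) \<Rightarrow> ('m \<Rightarrow> 'm) \<Rightarrow> bool" where
  "additive_functor F Fm \<longleftrightarrow>
     (\<forall>X \<in> obj K. F X \<in> obj K \<and> Fm (idm K X) = idm K (F X)) \<and>
     (\<forall>X Y f. f \<in> hom K X Y \<longrightarrow> Fm f \<in> hom K (F X) (F Y)) \<and>
     (\<forall>X Y Z f g. f \<in> hom K X Y \<longrightarrow> g \<in> hom K Y Z \<longrightarrow> Fm (cmp K g f) = cmp K (Fm g) (Fm f)) \<and>
     (\<forall>X Y f g. f \<in> hom K X Y \<longrightarrow> g \<in> hom K X Y \<longrightarrow> Fm (madd K f g) = madd K (Fm f) (Fm g))"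

context
  fixes F Fm assumes F: "additive_functor F Fm"
begin

lemma functor_obj: "X \<in> obj K \<Longrightarrow> F X \<in> obj K"
  and functor_id: "X \<in> obj K \<Longrightarrow> Fm (idm K X) = idm K (F X)"
  and functor_hom: "f \<in> hom K X Y \<Longrightarrow> Fm f \<in> hom K (F X) (F Y)"
  and functor_cmp: "f \<in> hom K X Y \<Longrightarrow> g \<in> hom K Y Z \<Longrightarrow> Fm (cmp K g f) = cmp K (Fm g) (Fm f)"
  and functor_add: "f \<in> hom K X Y \<Longrightarrow> g \<in> hom K X Y \<Longrightarrow> Fm (madd K f g) = madd K (Fm f) (Fm g)"
  using F unfolding additive_functor_def by blast+

lemma functor_zero: "X \<in> obj K \<Longrightarrow> Y \<in> obj K \<Longrightarrow> Fm (mzero K X Y) = mzero K (F X) (F Y)"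
  by (rule additive_map_zero) (use functor_hom functor_add zero_hom in blast)+

lemma functor_zero_obj: "zero_obj K Z \<Longrightarrow> zero_obj K (F Z)"
  using functor_id functor_obj functor_zero zero_obj_iff_id_eq_zero by metis

lemma functor_isomorphic:
  assumes "isomorphic K X Y"
  shows "isomorphic K (F X) (F Y)"
proof -
  obtain f g where f: "f \<in> hom K X Y" "g \<in> hom K Y X" "cmp K g f = idm K X" "cmp K f g = idm K Y"
    using assms unfolding isomorphic_def is_iso_def by blast
  then have "cmp K (Fm g) (Fm f) = idm K (F X)" "cmp K (Fm f) (Fm g) = idm K (F Y)"
    using functor_cmp functor_id hom_obj by metis+
  then show ?thesis
    unfolding isomorphic_def is_iso_def using functor_hom f by blast
qed

lemma functor_biprod:
  assumes "is_biprod K X Y S"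
  shows "is_biprod K (F X) (F Y) (F S)"
proof -
  obtain i1 i2 p1 p2 where o: "X \<in> obj K" "Y \<in> obj K" "S \<in> obj K"
    and m: "i1 \<in> hom K X S" "i2 \<in> hom K Y S" "p1 \<in> hom K S X" "p2 \<in> hom K S Y"
    and e: "cmp K p1 i1 = idm K X" "cmp K p2 i2 = idm K Y"
      "cmp K p1 i2 = mzero K Y X" "cmp K p2 i1 = mzero K X Y"
      "madd K (cmp K i1 p1) (cmp K i2 p2) = idm K S"
    using assms unfolding is_biprod_def by blast
  have "cmp K (Fm p1) (Fm i1) = idm K (F X)" "cmp K (Fm p2) (Fm i2) = idm K (F Y)"
    "cmp K (Fm p1) (Fm i2) = mzero K (F Y) (F X)" "cmp K (Fm p2) (Fm i1) = mzero K (F X) (F Y)"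
    using functor_cmp[symmetric] functor_id functor_zero m e o by simp_all
  moreover have "madd K (cmp K (Fm i1) (Fm p1)) (cmp K (Fm i2) (Fm p2)) =
      Fm (madd K (cmp K i1 p1) (cmp K i2 p2))"
    using functor_cmp[OF m(3) m(1)] functor_cmp[OF m(4) m(2)]
      functor_add[OF cmp_hom[OF m(3) m(1)] cmp_hom[OF m(4) m(2)]] by simp
  then have "madd K (cmp K (Fm i1) (Fm p1)) (cmp K (Fm i2) (Fm p2)) = idm K (F S)"
    using functor_id e o by simp
  ultimately show ?thesis
    unfolding is_biprod_def using functor_obj functor_hom o m by blast
qed

end

lemma tensor_left_additive:
  assumes W: "W \<in> obj K"
  shows "additive_functor (\<lambda>X. tensO K X W) (\<lambda>f. tensM K f (idm K W))"
  unfolding additive_functor_def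
proof (intro conjI allI impI ballI)
  have idW: "idm K W \<in> hom K W W" "cmp K (idm K W) (idm K W) = idm K W"
    using id_hom cmp_id_left W by blast+
  fix X Y Z f g
  show "tensO K X W \<in> obj K" "tensM K (idm K X) (idm K W) = idm K (tensO K X W)"
    if "X \<in> obj K" using that tens_obj tens_id W by blast+
  show "tensM K f (idm K W) \<in> hom K (tensO K X W) (tensO K Y W)"
    if "f \<in> hom K X Y" using that tens_hom idW by blast
  show "tensM K (cmp K g f) (idm K W) = cmp K (tensM K g (idm K W)) (tensM K f (idm K W))"
    if "f \<in> hom K X Y" "g \<in> hom K Y Z" using tens_cmp[OF that idW(1) idW(1)] idW(2) by simp
  show "tensM K (madd K f g) (idm K W) = madd K (tensM K f (idm K W)) (tensM K g (idm K W))"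
    if "f \<in> hom K X Y" "g \<in> hom K X Y" using tens_add_left[OF that idW(1)] .
qed

lemma tensor_right_additive:
  assumes W: "W \<in> obj K"
  shows "additive_functor (\<lambda>X. tensO K W X) (\<lambda>f. tensM K (idm K W) f)"
  unfolding additive_functor_def
proof (intro conjI allI impI ballI)
  have idW: "idm K W \<in> hom K W W" "cmp K (idm K W) (idm K W) = idm K W"
    using id_hom cmp_id_left W by blast+
  fix X Y Z f g
  show "tensO K W X \<in> obj K" "tensM K (idm K W) (idm K X) = idm K (tensO K W X)"
    if "X \<in> obj K" using that tens_obj tens_id W by blast+
  show "tensM K (idm K W) f \<in> hom K (tensO K W X) (tensO K W Y)"
    if "f \<in> hom K X Y" using that tens_hom idW by blast
  show "tensM K (idm K W) (cmp K g f) = cmp K (tensM K (idm K W) g) (tensM K (idm K W) f)"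
    if "f \<in> hom K X Y" "g \<in> hom K Y Z" using tens_cmp[OF idW(1) idW(1) that] idW(2) by simp
  show "tensM K (idm K W) (madd K f g) = madd K (tensM K (idm K W) f) (tensM K (idm K W) g)"
    if "f \<in> hom K X Y" "g \<in> hom K X Y" using tens_add_right[OF that idW(1)] .
qed

lemma thickD:
  assumes "thick K P"
  shows "P \<subseteq> obj K"
    and "zero_obj K Z \<Longrightarrow> Z \<in> P"
    and "X \<in> P \<Longrightarrow> isomorphic K X Y \<Longrightarrow> Y \<in> P"
    and "X \<in> obj K \<Longrightarrow> shO K X \<in> P \<longleftrightarrow> X \<in> P"
    and "(X,Y,Z,f,g,h) \<in> tri K \<Longrightarrow> X \<in> P \<Longrightarrow> Y \<in> P \<Longrightarrow> Z \<in> P"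
    and "(X,Y,Z,f,g,h) \<in> tri K \<Longrightarrow> Y \<in> P \<Longrightarrow> Z \<in> P \<Longrightarrow> X \<in> P"
    and "(X,Y,Z,f,g,h) \<in> tri K \<Longrightarrow> X \<in> P \<Longrightarrow> Z \<in> P \<Longrightarrow> Y \<in> P"
    and "is_biprod K X Y S \<Longrightarrow> S \<in> P \<Longrightarrow> X \<in> P"
  using assms unfolding thick_def by (elim conjE; metis)+

lemma thickI:
  assumes "P \<subseteq> obj K"
    and "\<And>Z. zero_obj K Z \<Longrightarrow> Z \<in> P"
    and "\<And>X Y. X \<in> P \<Longrightarrow> isomorphic K X Y \<Longrightarrow> Y \<in> P"
    and "\<And>X. X \<in> obj K \<Longrightarrow> shO K X \<in> P \<longleftrightarrow> X \<in> P"
    and "\<And>X Y Z f g h. (X,Y,Z,f,g,h) \<in> tri K \<Longrightarrow> X \<in> P \<Longrightarrow> Y \<in> P \<Longrightarrow> Z \<in> P"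
    and "\<And>X Y Z f g h. (X,Y,Z,f,g,h) \<in> tri K \<Longrightarrow> Y \<in> P \<Longrightarrow> Z \<in> P \<Longrightarrow> X \<in> P"
    and "\<And>X Y Z f g h. (X,Y,Z,f,g,h) \<in> tri K \<Longrightarrow> X \<in> P \<Longrightarrow> Z \<in> P \<Longrightarrow> Y \<in> P"
    and "\<And>X Y S. is_biprod K X Y S \<Longrightarrow> S \<in> P \<Longrightarrow> X \<in> P"
  shows "thick K P"
  unfolding thick_def
proof (intro conjI allI impI ballI)
  fix X Y Z f g h
  assume "(X, Y, Z, f, g, h) \<in> tri K"
  then show "X \<in> P \<Longrightarrow> Y \<in> P \<Longrightarrow> Z \<in> P" "Y \<in> P \<Longrightarrow> Z \<in> P \<Longrightarrow> X \<in> P"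
    "X \<in> P \<Longrightarrow> Z \<in> P \<Longrightarrow> Y \<in> P"
    using assms(5-7) by blast+
qed (use assms(1-4,8) in blast)+

lemma thick_Inter:
  assumes thick: "\<And>T. T \<in> F \<Longrightarrow> thick K T"
  shows "thick K (obj K \<inter> \<Inter>F)"
proof (rule thickI)
  note D = thickD[OF thick]
  show "obj K \<inter> \<Inter>F \<subseteq> obj K" by blast
  show "zero_obj K Z \<Longrightarrow> Z \<in> obj K \<inter> \<Inter>F" for Z
    using D(2) zero_obj_iff_id_eq_zero by blast
  show "X \<in> obj K \<inter> \<Inter>F \<Longrightarrow> isomorphic K X Y \<Longrightarrow> Y \<in> obj K \<inter> \<Inter>F" for X Y
    using D(3) isomorphic_obj by blast
  show "X \<in> obj K \<Longrightarrow> shO K X \<in> obj K \<inter> \<Inter>F \<longleftrightarrow> X \<in> obj K \<inter> \<Inter>F" for X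
    using D(4) shift_obj by blast
  show "is_biprod K X Y S \<Longrightarrow> S \<in> obj K \<inter> \<Inter>F \<Longrightarrow> X \<in> obj K \<inter> \<Inter>F" for X Y S
    using D(8) unfolding is_biprod_def by blast
qed (use tri_obj in \<open>auto intro: thickD(5-7)[OF thick]\<close>)+

lemma thick_vimage:
  assumes F: "additive_functor F Fm" and P: "thick K P"
    and shift: "\<And>X. X \<in> obj K \<Longrightarrow> isomorphic K (F (shO K X)) (shO K (F X))"
    and tri: "\<And>X Y Z f g h. (X,Y,Z,f,g,h) \<in> tri K \<Longrightarrow>
      \<exists>h'. (F X, F Y, F Z, Fm f, Fm g, h') \<in> tri K"
  shows "thick K {X \<in> obj K. F X \<in> P}"
proof (rule thickI)
  note D = thickD[OF P]
  show "{X \<in> obj K. F X \<in> P} \<subseteq> obj K" by blast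
  show "zero_obj K Z \<Longrightarrow> Z \<in> {X \<in> obj K. F X \<in> P}" for Z
    using D(2) functor_zero_obj[OF F] zero_obj_iff_id_eq_zero by blast
  show "X \<in> {X \<in> obj K. F X \<in> P} \<Longrightarrow> isomorphic K X Y \<Longrightarrow> Y \<in> {X \<in> obj K. F X \<in> P}"
    for X Y using D(3) functor_isomorphic[OF F] isomorphic_obj by blast
  show "X \<in> obj K \<Longrightarrow> shO K X \<in> {X \<in> obj K. F X \<in> P} \<longleftrightarrow> X \<in> {X \<in> obj K. F X \<in> P}"
    for X using D(3,4) shift isomorphic_sym shift_obj functor_obj[OF F] by blast
  show "is_biprod K X Y S \<Longrightarrow> S \<in> {X \<in> obj K. F X \<in> P} \<Longrightarrow> X \<in> {X \<in> obj K. F X \<in> P}"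
    for X Y S using D(8) functor_biprod[OF F] unfolding is_biprod_def by blast
next
  fix X Y Z f g h
  assume "(X, Y, Z, f, g, h) \<in> tri K"
  then obtain h' where image: "(F X, F Y, F Z, Fm f, Fm g, h') \<in> tri K"
    and "X \<in> obj K" "Y \<in> obj K" "Z \<in> obj K"
    using tri tri_obj by blast
  then show "X \<in> {X \<in> obj K. F X \<in> P} \<Longrightarrow> Y \<in> {X \<in> obj K. F X \<in> P} \<Longrightarrow> Z \<in> {X \<in> obj K. F X \<in> P}"
    and "Y \<in> {X \<in> obj K. F X \<in> P} \<Longrightarrow> Z \<in> {X \<in> obj K. F X \<in> P} \<Longrightarrow> X \<in> {X \<in> obj K. F X \<in> P}"
    and "X \<in> {X \<in> obj K. F X \<in> P} \<Longrightarrow> Z \<in> {X \<in> obj K. F X \<in> P} \<Longrightarrow> Y \<in> {X \<in> obj K. F X \<in> P}"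
    using thickD(5-7)[OF P image] by simp_all
qed

lemma thick_vimage_tensor_left:
  assumes "thick K P" and W: "W \<in> obj K"
  shows "thick K {X \<in> obj K. tensO K X W \<in> P}"
  using thick_vimage[OF tensor_left_additive[OF W] assms(1)] sigL_iso[OF W] tens_tri_left[OF W]
    is_iso_isomorphic by blast

lemma thick_vimage_tensor_right:
  assumes "thick K P" and W: "W \<in> obj K"
  shows "thick K {X \<in> obj K. tensO K W X \<in> P}"
  using thick_vimage[OF tensor_right_additive[OF W] assms(1)] sigR_iso[OF W] tens_tri_right[OF W]
    is_iso_isomorphic by blast

lemma thick_Union_chain:
  assumes "CC \<noteq> {}" and thick: "\<And>T. T \<in> CC \<Longrightarrow> thick K T"
    and chain: "\<And>I J. I \<in> CC \<Longrightarrow> J \<in> CC \<Longrightarrow> I \<subseteq> J \<or> J \<subseteq> I"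
  shows "thick K (\<Union>CC)"
proof (rule thickI)
  have common: "\<exists>T \<in> CC. X \<in> T \<and> Y \<in> T" if "X \<in> \<Union>CC" "Y \<in> \<Union>CC" for X Y
    using that chain by blast
  note D = thickD[OF thick]
  show "\<Union>CC \<subseteq> obj K" using D(1) by blast
  show "zero_obj K Z \<Longrightarrow> Z \<in> \<Union>CC" for Z using D(2) assms(1) by blast
  show "X \<in> \<Union>CC \<Longrightarrow> isomorphic K X Y \<Longrightarrow> Y \<in> \<Union>CC" for X Y using D(3) by blast
  show "X \<in> obj K \<Longrightarrow> shO K X \<in> \<Union>CC \<longleftrightarrow> X \<in> \<Union>CC" for X using D(4) by blast
  show "is_biprod K X Y S \<Longrightarrow> S \<in> \<Union>CC \<Longrightarrow> X \<in> \<Union>CC" for X Y S using D(8) by blast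
  fix X Y Z f g h
  assume t: "(X, Y, Z, f, g, h) \<in> tri K"
  show "X \<in> \<Union>CC \<Longrightarrow> Y \<in> \<Union>CC \<Longrightarrow> Z \<in> \<Union>CC" using common D(5)[OF _ t] by blast
  show "Y \<in> \<Union>CC \<Longrightarrow> Z \<in> \<Union>CC \<Longrightarrow> X \<in> \<Union>CC" using common D(6)[OF _ t] by blast
  show "X \<in> \<Union>CC \<Longrightarrow> Z \<in> \<Union>CC \<Longrightarrow> Y \<in> \<Union>CC" using common D(7)[OF _ t] by blast
qed

lemma thick_idealI:
  "thick K I \<Longrightarrow> (\<And>X Y. X \<in> I \<Longrightarrow> Y \<in> obj K \<Longrightarrow> tensO K X Y \<in> I \<and> tensO K Y X \<in> I) \<Longrightarrow>
    thick_ideal K I"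
  unfolding thick_ideal_def by blast

lemma thick_idealD:
  assumes "thick_ideal K I"
  shows "thick K I" and "I \<subseteq> obj K"
    and "X \<in> I \<Longrightarrow> Y \<in> obj K \<Longrightarrow> tensO K X Y \<in> I"
    and "X \<in> I \<Longrightarrow> Y \<in> obj K \<Longrightarrow> tensO K Y X \<in> I"
    and "Y \<in> I \<Longrightarrow> isomorphic K X Y \<Longrightarrow> X \<in> I"
  using assms thickD(1,3) isomorphic_sym unfolding thick_ideal_def by blast+

lemma thick_ideal_Union_chain:
  assumes "CC \<noteq> {}" and "\<And>I. I \<in> CC \<Longrightarrow> thick_ideal K I"
    and "\<And>I J. I \<in> CC \<Longrightarrow> J \<in> CC \<Longrightarrow> I \<subseteq> J \<or> J \<subseteq> I"
  shows "thick_ideal K (\<Union>CC)"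
proof (rule thick_idealI)
  show "thick K (\<Union>CC)"
    by (rule thick_Union_chain) (use assms thick_idealD(1) in blast)+
  show "X \<in> \<Union>CC \<Longrightarrow> Y \<in> obj K \<Longrightarrow> tensO K X Y \<in> \<Union>CC \<and> tensO K Y X \<in> \<Union>CC" for X Y
    using assms(2) thick_idealD(3,4) by blast
qed

definition ideal_hull :: "'o set \<Rightarrow> 'o set" where
  "ideal_hull X = obj K \<inter> \<Inter>{T. thick_ideal K T \<and> X \<subseteq> T}"

lemma thick_ideal_ideal_hull: "thick_ideal K (ideal_hull X)"
proof (rule thick_idealI)
  show "thick K (ideal_hull X)"
    unfolding ideal_hull_def by (rule thick_Inter) (use thick_idealD(1) in blast)
  show "Y \<in> ideal_hull X \<Longrightarrow> Z \<in> obj K \<Longrightarrow>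
      tensO K Y Z \<in> ideal_hull X \<and> tensO K Z Y \<in> ideal_hull X" for Y Z
    unfolding ideal_hull_def using thick_idealD(3,4) tens_obj by blast
qed

lemma ideal_hull_superset: "X \<subseteq> obj K \<Longrightarrow> X \<subseteq> ideal_hull X"
  unfolding ideal_hull_def by blast

lemma ideal_hull_minimal: "thick_ideal K T \<Longrightarrow> X \<subseteq> T \<Longrightarrow> ideal_hull X \<subseteq> T"
  unfolding ideal_hull_def by blast

lemma ideal_hull_obj: "ideal_hull X \<subseteq> obj K"
  unfolding ideal_hull_def by blast

lemma assoc_isomorphic:
  "X \<in> obj K \<Longrightarrow> Y \<in> obj K \<Longrightarrow> Z \<in> obj K \<Longrightarrow>
    isomorphic K (tensO K (tensO K X Y) Z) (tensO K X (tensO K Y Z))"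
  using assoc_iso is_iso_isomorphic by blast

lemma isomorphic_tensor_left:
  "isomorphic K X X' \<Longrightarrow> W \<in> obj K \<Longrightarrow> isomorphic K (tensO K X W) (tensO K X' W)"
  using functor_isomorphic[OF tensor_left_additive] by blast

text \<open>Without commutativity this, not
  \<open>I \<otimes> J \<subseteq> Q\<close>, is the condition that passes to the ideals generated by \<open>I\<close> and \<open>J\<close>.\<close>

definition sandwiched :: "'o set \<Rightarrow> 'o set \<Rightarrow> 'o set \<Rightarrow> bool" where
  "sandwiched Q I J \<longleftrightarrow> (\<forall>a \<in> I. \<forall>W \<in> obj K. \<forall>b \<in> J. tensO K (tensO K a W) b \<in> Q)"

lemma thick_ideal_right_sandwiched:
  assumes Q: "thick_ideal K Q" and I: "I \<subseteq> obj K"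
  shows "thick_ideal K {b \<in> obj K. sandwiched Q I {b}}"
proof (rule thick_idealI)
  have "{b \<in> obj K. sandwiched Q I {b}} =
      obj K \<inter> \<Inter>{{b \<in> obj K. tensO K (tensO K a W) b \<in> Q} | a W. a \<in> I \<and> W \<in> obj K}"
    unfolding sandwiched_def by blast
  also have "thick K \<dots>"
    using thick_vimage_tensor_right[OF thick_idealD(1)[OF Q]] tens_obj I
    by (intro thick_Inter) blast
  finally show "thick K {b \<in> obj K. sandwiched Q I {b}}" .
next
  fix b Z
  assume b: "b \<in> {b \<in> obj K. sandwiched Q I {b}}" and Z: "Z \<in> obj K"
  have "tensO K (tensO K a W) (tensO K b Z) \<in> Q \<and> tensO K (tensO K a W) (tensO K Z b) \<in> Q"
    if a: "a \<in> I" and W: "W \<in> obj K" for a W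
  proof
    have "a \<in> obj K" "b \<in> obj K" using a I b by blast+
    note objs = this tens_obj W Z
    have "tensO K (tensO K (tensO K a W) b) Z \<in> Q"
      using b a W Z thick_idealD(3)[OF Q] unfolding sandwiched_def by blast
    moreover have "isomorphic K (tensO K (tensO K a W) (tensO K b Z))
        (tensO K (tensO K (tensO K a W) b) Z)"
      using assoc_isomorphic isomorphic_sym objs by blast
    ultimately show "tensO K (tensO K a W) (tensO K b Z) \<in> Q"
      using thick_idealD(5)[OF Q] by blast
    have "tensO K (tensO K a (tensO K W Z)) b \<in> Q"
      using b a W Z tens_obj unfolding sandwiched_def by blast
    moreover have "isomorphic K (tensO K (tensO K a W) (tensO K Z b))
        (tensO K (tensO K (tensO K a W) Z) b)"
      using assoc_isomorphic isomorphic_sym objs by blast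
    moreover have "isomorphic K (tensO K (tensO K (tensO K a W) Z) b)
        (tensO K (tensO K a (tensO K W Z)) b)"
      using assoc_isomorphic isomorphic_tensor_left objs by blast
    ultimately show "tensO K (tensO K a W) (tensO K Z b) \<in> Q"
      using thick_idealD(5)[OF Q] isomorphic_trans by blast
  qed
  then show "tensO K b Z \<in> {b \<in> obj K. sandwiched Q I {b}} \<and>
      tensO K Z b \<in> {b \<in> obj K. sandwiched Q I {b}}"
    using b Z tens_obj unfolding sandwiched_def by auto
qed

lemma thick_ideal_left_sandwiched:
  assumes Q: "thick_ideal K Q" and J: "J \<subseteq> obj K"
  shows "thick_ideal K {a \<in> obj K. sandwiched Q {a} J}"
proof (rule thick_idealI)
  have "{a \<in> obj K. sandwiched Q {a} J} =
      obj K \<inter> \<Inter>{{a \<in> obj K. tensO K a W \<in> {c \<in> obj K. tensO K c b \<in> Q}} | W b.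
        W \<in> obj K \<and> b \<in> J}"
    unfolding sandwiched_def using tens_obj by blast
  also have "thick K \<dots>"
    using thick_vimage_tensor_left[OF thick_vimage_tensor_left[OF thick_idealD(1)[OF Q]]] J
    by (intro thick_Inter) blast
  finally show "thick K {a \<in> obj K. sandwiched Q {a} J}" .
next
  fix a Z
  assume a: "a \<in> {a \<in> obj K. sandwiched Q {a} J}" and Z: "Z \<in> obj K"
  have "tensO K (tensO K (tensO K a Z) W) b \<in> Q \<and> tensO K (tensO K (tensO K Z a) W) b \<in> Q"
    if W: "W \<in> obj K" and b: "b \<in> J" for W b
  proof
    have "a \<in> obj K" "b \<in> obj K" using a J b by blast+
    note objs = this tens_obj W Z
    have "tensO K (tensO K a (tensO K Z W)) b \<in> Q"
      using a b W Z tens_obj unfolding sandwiched_def by blast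
    moreover have "isomorphic K (tensO K (tensO K (tensO K a Z) W) b)
        (tensO K (tensO K a (tensO K Z W)) b)"
      using assoc_isomorphic isomorphic_tensor_left objs by blast
    ultimately show "tensO K (tensO K (tensO K a Z) W) b \<in> Q"
      using thick_idealD(5)[OF Q] by blast
    have "tensO K Z (tensO K (tensO K a W) b) \<in> Q"
      using a b W Z thick_idealD(4)[OF Q] unfolding sandwiched_def by blast
    moreover have "isomorphic K (tensO K (tensO K (tensO K Z a) W) b)
        (tensO K (tensO K Z (tensO K a W)) b)"
      using assoc_isomorphic isomorphic_tensor_left objs by blast
    moreover have "isomorphic K (tensO K (tensO K Z (tensO K a W)) b)
        (tensO K Z (tensO K (tensO K a W) b))"
      using assoc_isomorphic objs by blast
    ultimately show "tensO K (tensO K (tensO K Z a) W) b \<in> Q"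
      using thick_idealD(5)[OF Q] isomorphic_trans by blast
  qed
  then show "tensO K a Z \<in> {a \<in> obj K. sandwiched Q {a} J} \<and>
      tensO K Z a \<in> {a \<in> obj K. sandwiched Q {a} J}"
    using a Z tens_obj unfolding sandwiched_def by auto
qed

lemma sandwiched_ideal_hull:
  assumes Q: "thick_ideal K Q" and I: "I \<subseteq> obj K" and J: "J \<subseteq> obj K"
    and IJ: "sandwiched Q I J"
  shows "sandwiched Q (ideal_hull I) (ideal_hull J)"
proof -
  have "ideal_hull J \<subseteq> {b \<in> obj K. sandwiched Q I {b}}"
  proof (rule ideal_hull_minimal[OF thick_ideal_right_sandwiched[OF Q I]])
    show "J \<subseteq> {b \<in> obj K. sandwiched Q I {b}}"
      using J IJ unfolding sandwiched_def by blast
  qed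
  then have "sandwiched Q I (ideal_hull J)"
    unfolding sandwiched_def by blast
  then have "ideal_hull I \<subseteq> {a \<in> obj K. sandwiched Q {a} (ideal_hull J)}"
    using I by (intro ideal_hull_minimal[OF thick_ideal_left_sandwiched[OF Q ideal_hull_obj]])
      (auto simp: sandwiched_def)
  then show ?thesis
    unfolding sandwiched_def by blast
qed

lemma prime_idealD:
  assumes "prime_ideal K P"
  shows "thick_ideal K P" and "P \<noteq> obj K"
    and "thick_ideal K I \<Longrightarrow> thick_ideal K J \<Longrightarrow> \<forall>X \<in> I. \<forall>Y \<in> J. tensO K X Y \<in> P \<Longrightarrow>
      I \<subseteq> P \<or> J \<subseteq> P"
  using assms unfolding prime_ideal_def by blast+

lemma prime_sandwich:
  assumes P: "prime_ideal K P" and B: "B \<in> obj K" and C: "C \<in> obj K"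
    and BC: "sandwiched P {B} {C}"
  shows "B \<in> P \<or> C \<in> P"
proof -
  note P_ideal = prime_idealD(1)[OF P]
  have hulls: "sandwiched P (ideal_hull {B}) (ideal_hull {C})"
    using B C BC by (intro sandwiched_ideal_hull[OF P_ideal]) auto
  have "tensO K X Y \<in> P" if X: "X \<in> ideal_hull {B}" and Y: "Y \<in> ideal_hull {C}" for X Y
  proof -
    have "X \<in> obj K" "Y \<in> obj K" using X Y ideal_hull_obj by blast+
    then have "isomorphic K (tensO K X Y) (tensO K (tensO K X (unitO K)) Y)"
      using isomorphic_tensor_left[OF is_iso_isomorphic[OF runit_iso]] isomorphic_sym by blast
    moreover have "tensO K (tensO K X (unitO K)) Y \<in> P"
      using hulls X Y unit_obj unfolding sandwiched_def by blast
    ultimately show ?thesis using thick_idealD(5)[OF P_ideal] by blast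
  qed
  then have "ideal_hull {B} \<subseteq> P \<or> ideal_hull {C} \<subseteq> P"
    using prime_idealD(3)[OF P thick_ideal_ideal_hull thick_ideal_ideal_hull] by blast
  then show ?thesis
    using ideal_hull_superset B C by blast
qed

lemma prime_tensor_generator_iff:
  assumes P: "prime_ideal K P" and G: "thick_generated_by K G"
    and B: "B \<in> obj K" and C: "C \<in> obj K"
  shows "tensO K (tensO K B G) C \<in> P \<longleftrightarrow> B \<in> P \<or> C \<in> P"
proof
  note P_ideal = prime_idealD(1)[OF P]
  have G_obj: "G \<in> obj K" using G unfolding thick_generated_by_def by blast
  {
    assume "tensO K (tensO K B G) C \<in> P"
    moreover have "thick K {X \<in> obj K. tensO K B X \<in> {Y \<in> obj K. tensO K Y C \<in> P}}"
      by (intro thick_vimage_tensor_right thick_vimage_tensor_left thick_idealD(1)[OF P_ideal] B C)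
    ultimately have "{X \<in> obj K. tensO K B X \<in> {Y \<in> obj K. tensO K Y C \<in> P}} = obj K"
      using G G_obj B tens_obj unfolding thick_generated_by_def by blast
    then show "B \<in> P \<or> C \<in> P"
      using prime_sandwich[OF P B C] unfolding sandwiched_def by blast
  next
    assume "B \<in> P \<or> C \<in> P"
    then show "tensO K (tensO K B G) C \<in> P"
      using thick_idealD(3,4)[OF P_ideal] G_obj B C tens_obj by blast
  }
qed

lemma unit_notin_prime:
  assumes P: "prime_ideal K P"
  shows "unitO K \<notin> P"
proof
  note P_ideal = prime_idealD(1)[OF P]
  assume "unitO K \<in> P"
  then have "X \<in> P" if X: "X \<in> obj K" for X
  proof (rule thick_idealD(5)[OF P_ideal thick_idealD(3)[OF P_ideal _ X]])
    show "isomorphic K X (tensO K (unitO K) X)"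
      using isomorphic_sym is_iso_isomorphic[OF lunit_iso[OF X]] .
  qed
  then show False
    using prime_idealD(2)[OF P] thick_idealD(2)[OF P_ideal] by blast
qed

lemma Vobj_unit: "Vobj K (unitO K) = Spc K"
  unfolding Vobj_def Spc_def using unit_notin_prime by blast

lemma Vobj_tensor_generator:
  assumes "thick_generated_by K G" and "B \<in> obj K" and "C \<in> obj K"
  shows "Vobj K (tensO K (tensO K B G) C) = Vobj K B \<inter> Vobj K C"
  unfolding Vobj_def Spc_def using prime_tensor_generator_iff[OF _ assms] by blast

lemma Vobj_Int_Vset_finite:
  assumes G: "thick_generated_by K G" and A: "A \<in> obj K"
    and "finite F" and "F \<subseteq> obj K"
  shows "\<exists>A' \<in> obj K. Vobj K A' = Vobj K A \<inter> Vset K F"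
  using \<open>finite F\<close> \<open>F \<subseteq> obj K\<close>
proof (induction F rule: finite_induct)
  case empty
  show ?case using A unfolding Vobj_def Vset_def by blast
next
  case (insert X F)
  then obtain A' where A': "A' \<in> obj K" "Vobj K A' = Vobj K A \<inter> Vset K F"
    by blast
  have "X \<in> obj K" "G \<in> obj K"
    using insert.prems G unfolding thick_generated_by_def by blast+
  then have "tensO K (tensO K A' G) X \<in> obj K"
    and "Vobj K (tensO K (tensO K A' G) X) = Vobj K A \<inter> Vset K (insert X F)"
    using A' tens_obj Vobj_tensor_generator[OF G A'(1)] unfolding Vset_def Vobj_def by auto
  then show ?case by blast
qed

lemma sandwiched_Un:
  assumes Q: "thick_ideal K Q" and I: "thick_ideal K I" and J: "J \<subseteq> obj K"
    and IJ: "\<forall>X \<in> I. \<forall>Y \<in> J. tensO K X Y \<in> Q"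
  shows "sandwiched Q (Q \<union> I) (Q \<union> J)"
  unfolding sandwiched_def
proof (intro ballI)
  fix a W b
  assume a: "a \<in> Q \<union> I" and W: "W \<in> obj K" and b: "b \<in> Q \<union> J"
  have "a \<in> obj K" "b \<in> obj K"
    using a b thick_idealD(2) Q I J by blast+
  show "tensO K (tensO K a W) b \<in> Q"
  proof (cases "a \<in> Q")
    case True
    then show ?thesis
      using thick_idealD(3)[OF Q] W \<open>b \<in> obj K\<close> by blast
  next
    case False
    then have "tensO K a W \<in> I"
      using a thick_idealD(3)[OF I] W by blast
    then show ?thesis
      using b IJ thick_idealD(4)[OF Q] tens_obj[OF \<open>a \<in> obj K\<close> W] by blast
  qed
qed

definition multiplicative_wrt :: "'o \<Rightarrow> 'o set \<Rightarrow> bool" where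
  "multiplicative_wrt G M \<longleftrightarrow> unitO K \<in> M \<and> (\<forall>a \<in> M. \<forall>b \<in> M. tensO K (tensO K a G) b \<in> M)"

lemma prime_if_maximal_disjoint:
  assumes M: "multiplicative_wrt G M" and G: "G \<in> obj K"
    and Q: "thick_ideal K Q" and QM: "Q \<inter> M = {}"
    and maximal: "\<And>I. thick_ideal K I \<Longrightarrow> Q \<subseteq> I \<Longrightarrow> I \<inter> M = {} \<Longrightarrow> I = Q"
  shows "prime_ideal K Q"
  unfolding prime_ideal_def
proof (intro conjI allI impI)
  show "thick_ideal K Q" by (fact Q)
  have "unitO K \<in> M" using M unfolding multiplicative_wrt_def by blast
  then show "Q \<noteq> obj K"
    using QM unit_obj by (metis IntI empty_iff)
  fix I J
  assume I: "thick_ideal K I" and J: "thick_ideal K J"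
    and IJ: "\<forall>X \<in> I. \<forall>Y \<in> J. tensO K X Y \<in> Q"
  have meets: "\<exists>m \<in> M. m \<in> ideal_hull (Q \<union> I')" if I': "thick_ideal K I'" "\<not> I' \<subseteq> Q" for I'
  proof (rule ccontr)
    have hull: "Q \<union> I' \<subseteq> ideal_hull (Q \<union> I')"
      by (rule ideal_hull_superset) (use thick_idealD(2) Q I'(1) in blast)
    assume "\<not> (\<exists>m \<in> M. m \<in> ideal_hull (Q \<union> I'))"
    then have "ideal_hull (Q \<union> I') \<inter> M = {}" by blast
    then have "ideal_hull (Q \<union> I') = Q"
      using maximal[OF thick_ideal_ideal_hull] hull by blast
    then show False
      using hull I'(2) by blast
  qed
  show "I \<subseteq> Q \<or> J \<subseteq> Q"
  proof (rule ccontr)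
    assume "\<not> (I \<subseteq> Q \<or> J \<subseteq> Q)"
    then obtain m1 m2 where m: "m1 \<in> M" "m2 \<in> M"
      and "m1 \<in> ideal_hull (Q \<union> I)" "m2 \<in> ideal_hull (Q \<union> J)"
      using meets I J by blast
    moreover have "sandwiched Q (Q \<union> I) (Q \<union> J)"
      by (rule sandwiched_Un[OF Q I thick_idealD(2)[OF J] IJ])
    then have "sandwiched Q (ideal_hull (Q \<union> I)) (ideal_hull (Q \<union> J))"
      using thick_idealD(2) Q I J by (intro sandwiched_ideal_hull[OF Q]) auto
    ultimately have "tensO K (tensO K m1 G) m2 \<in> Q"
      using G unfolding sandwiched_def by blast
    moreover have "tensO K (tensO K m1 G) m2 \<in> M"
      using M m unfolding multiplicative_wrt_def by blast
    ultimately show False using QM by blast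
  qed
qed

lemma ex_maximal_thick_ideal_disjoint:
  assumes "thick_ideal K I0" and "I0 \<inter> M = {}"
  shows "\<exists>Q. thick_ideal K Q \<and> Q \<inter> M = {} \<and>
    (\<forall>I. thick_ideal K I \<longrightarrow> Q \<subseteq> I \<longrightarrow> I \<inter> M = {} \<longrightarrow> I = Q)"
proof -
  define \<Phi> where "\<Phi> = {I. thick_ideal K I \<and> I \<inter> M = {}}"
  have "\<exists>Q \<in> \<Phi>. \<forall>I \<in> \<Phi>. Q \<subseteq> I \<longrightarrow> I = Q"
  proof (rule subset_Zorn_nonempty)
    show "\<Phi> \<noteq> {}" using assms unfolding \<Phi>_def by blast
    fix CC assume "CC \<noteq> {}" and "subset.chain \<Phi> CC"
    then have "thick_ideal K (\<Union>CC)" and "\<Union>CC \<inter> M = {}"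
      using thick_ideal_Union_chain[of CC] unfolding \<Phi>_def subset_chain_def by blast+
    then show "\<Union>CC \<in> \<Phi>" unfolding \<Phi>_def by blast
  qed
  then obtain Q where "Q \<in> \<Phi>" and maximal: "\<And>I. I \<in> \<Phi> \<Longrightarrow> Q \<subseteq> I \<Longrightarrow> I = Q"
    by blast
  then show ?thesis
    unfolding \<Phi>_def by (intro exI[of _ Q]) blast
qed

lemma multiplicative_wrt_Vset_cover:
  assumes G: "thick_generated_by K G"
  shows "multiplicative_wrt G {m \<in> obj K. \<exists>F. finite F \<and> F \<subseteq> S \<and> Vset K F \<subseteq> Vobj K m}"
    (is "multiplicative_wrt G ?M")
  unfolding multiplicative_wrt_def
proof (intro conjI ballI)
  show "unitO K \<in> ?M"
    using unit_obj Vobj_unit by (auto simp: Vset_def)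
  fix a b assume "a \<in> ?M" "b \<in> ?M"
  then obtain Fa Fb where a: "a \<in> obj K" "finite Fa" "Fa \<subseteq> S" "Vset K Fa \<subseteq> Vobj K a"
    and b: "b \<in> obj K" "finite Fb" "Fb \<subseteq> S" "Vset K Fb \<subseteq> Vobj K b"
    by blast
  have "Vset K (Fa \<union> Fb) \<subseteq> Vobj K (tensO K (tensO K a G) b)"
    unfolding Vobj_tensor_generator[OF G a(1) b(1)]
    using a(4) b(4) by (auto simp: Vset_def)
  moreover have "tensO K (tensO K a G) b \<in> obj K"
    using tens_obj G a(1) b(1) unfolding thick_generated_by_def by blast
  ultimately show "tensO K (tensO K a G) b \<in> ?M"
    using a b by (intro CollectI conjI exI[of _ "Fa \<union> Fb"]) auto
qed

lemma Vset_empty_finite_subset: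
  assumes S: "S \<subseteq> obj K" and G: "thick_generated_by K G" and empty: "Vset K S = {}"
  shows "\<exists>F. finite F \<and> F \<subseteq> S \<and> Vset K F = {}"
proof (rule ccontr)
  assume no_finite: "\<not> ?thesis"
  have G_obj: "G \<in> obj K" using G unfolding thick_generated_by_def by blast
  define M where "M = {m \<in> obj K. \<exists>F. finite F \<and> F \<subseteq> S \<and> Vset K F \<subseteq> Vobj K m}"
  have "multiplicative_wrt G M"
    unfolding M_def by (rule multiplicative_wrt_Vset_cover[OF G])
  moreover have "ideal_hull {} \<inter> M = {}"
  proof -
    have "m \<notin> ideal_hull {}" if "m \<in> M" for m
    proof -
      obtain F where "finite F" "F \<subseteq> S" "Vset K F \<subseteq> Vobj K m"
        using \<open>m \<in> M\<close> unfolding M_def by blast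
      then obtain P where "prime_ideal K P" "m \<notin> P"
        using no_finite unfolding Vobj_def Spc_def by blast
      then show ?thesis
        using ideal_hull_minimal[OF prime_idealD(1)] by blast
    qed
    then show ?thesis by blast
  qed
  ultimately obtain Q where "prime_ideal K Q" "Q \<inter> M = {}"
    using ex_maximal_thick_ideal_disjoint[OF thick_ideal_ideal_hull]
      prime_if_maximal_disjoint[OF _ G_obj] by metis
  moreover have "S \<subseteq> M"
    unfolding M_def using S by (auto intro!: exI[of _ "{_}"] simp: Vset_def Vobj_def)
  ultimately have "Q \<in> Vset K S"
    unfolding Vset_def Spc_def by blast
  then show False using empty by blast
qed

end

lemma Vset_eq_Vobj_Int_Vset:
  assumes "Vobj K A = Vset K S1 \<union> Vset K S2" and "F \<subseteq> S1 \<union> S2" and "Vset K F = {}"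
  shows "Vset K S1 = Vobj K A \<inter> Vset K (F \<inter> S1)"
proof
  show "Vset K S1 \<subseteq> Vobj K A \<inter> Vset K (F \<inter> S1)"
    using assms(1) unfolding Vset_def by auto
  have "P \<in> Vset K S1" if P: "P \<in> Vobj K A" "P \<in> Vset K (F \<inter> S1)" for P
  proof (rule ccontr)
    assume "P \<notin> Vset K S1"
    then have "P \<in> Vset K S2" using P(1) assms(1) by blast
    then have "P \<in> Vset K F" using P(2) assms(2) unfolding Vset_def by blast
    then show False using assms(3) by blast
  qed
  then show "Vobj K A \<inter> Vset K (F \<inter> S1) \<subseteq> Vset K S1" by blast
qed

theorem mainTheorem19:
  fixes K :: "('o, 'm) mdc_struct" and G A :: 'o and S1 S2 :: "'o set"
  assumes "mdc K"
    and "thick_generated_by K G"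
    and "A \<in> obj K"
    and "S1 \<subseteq> obj K" and "S2 \<subseteq> obj K"
    and "Vobj K A = Vset K S1 \<union> Vset K S2"
    and "Vset K S1 \<inter> Vset K S2 = {}"
  shows "\<exists>A1 \<in> obj K. \<exists>A2 \<in> obj K. Vset K S1 = Vobj K A1 \<and> Vset K S2 = Vobj K A2"
proof -
  interpret mdc_cat K by (rule mdc_cat.intro) (fact assms(1))
  have "Vset K (S1 \<union> S2) = {}"
    using assms(7) unfolding Vset_def by blast
  with Vset_empty_finite_subset[OF Un_least[OF assms(4,5)] assms(2)]
  obtain F where F: "finite F" "F \<subseteq> S1 \<union> S2" "Vset K F = {}"
    by blast
  obtain A1 where "A1 \<in> obj K" "Vobj K A1 = Vobj K A \<inter> Vset K (F \<inter> S1)"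
    using Vobj_Int_Vset_finite[OF assms(2,3)] F(1) assms(4) by blast
  moreover obtain A2 where "A2 \<in> obj K" "Vobj K A2 = Vobj K A \<inter> Vset K (F \<inter> S2)"
    using Vobj_Int_Vset_finite[OF assms(2,3)] F(1) assms(5) by blast
  moreover have "Vset K S1 = Vobj K A \<inter> Vset K (F \<inter> S1)"
    using Vset_eq_Vobj_Int_Vset[OF assms(6) F(2,3)] .
  moreover have "Vset K S2 = Vobj K A \<inter> Vset K (F \<inter> S2)"
    using Vset_eq_Vobj_Int_Vset[of K A S2 S1 F] assms(6) F(2,3) by (simp add: Un_commute)
  ultimately show ?thesis by blast
qed

end
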